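(* Let $n\ge2$, $\beta\ge0$, $\alpha>-1$ with $\alpha<\beta-\frac12$. Then there is a constant $C$ depending only on $n,\alpha,\beta$ such that for all $0<\delta<\frac12$, $$\int_0^1\!\!\int_0^1\!\!\int_0^1\frac{s_1^\alpha\,t^{2n-3}\,ds_1\,ds_2\,dt}{(\delta+s_1+s_2+t^2)^{2+\beta}(\delta+s_1+s_2+t)^{2n-3}}\le C\,\delta^{\alpha-\beta+\frac12}.$$ *)

theory Defs
  imports "HOL-Analysis.Analysis"
begin

end

theory Submission
  imports Defs
begin

text \<open>
  Since \<open>t \<le> \<delta> + s\<^sub>1 + s\<^sub>2 + t\<close>, the factor with exponent \<open>2n - 3\<close> is at most 1. Split
  \<open>2 + \<beta> = a + b + c\<close> with \<open>a > \<alpha> + 1\<close>, \<open>b > 1\<close>, \<open>c > 1/2\<close>, which is possible exactly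
  because \<open>\<alpha> < \<beta> - 1/2\<close>. As \<open>\<delta> + s\<^sub>1 + s\<^sub>2 + t\<^sup>2\<close> dominates each of \<open>\<delta> + s\<^sub>1\<close>,
  \<open>\<delta> + s\<^sub>2\<close> and \<open>\<delta> + t\<^sup>2\<close>, the kernel is bounded by the product
  \<open>s\<^sub>1\<^sup>\<alpha> (\<delta> + s\<^sub>1)\<^sup>-\<^sup>a \<cdot> (\<delta> + s\<^sub>2)\<^sup>-\<^sup>b \<cdot> (\<delta> + t\<^sup>2)\<^sup>-\<^sup>c\<close>. Integrating each factor
  over \<open>[0, \<infinity>)\<close> (Tonelli) gives \<open>\<delta>\<^sup>\<alpha>\<^sup>+\<^sup>1\<^sup>-\<^sup>a\<close>, \<open>\<delta>\<^sup>1\<^sup>-\<^sup>b\<close> and \<open>\<delta>\<^sup>1\<^sup>/\<^sup>2\<^sup>-\<^sup>c\<close>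
  up to constants, and these exponents add up to \<open>\<alpha> - \<beta> + 1/2\<close>.
\<close>

lemma nn_integral_lborel_prod_mult:
  fixes f :: "'a::euclidean_space \<Rightarrow> ennreal" and g :: "'b::euclidean_space \<Rightarrow> ennreal"
  assumes [measurable]: "f \<in> borel_measurable borel" "g \<in> borel_measurable borel"
  shows "(\<integral>\<^sup>+x. f (fst x) * g (snd x) \<partial>lborel) = (\<integral>\<^sup>+x. f x \<partial>lborel) * (\<integral>\<^sup>+y. g y \<partial>lborel)"
proof -
  have "(\<integral>\<^sup>+x. f (fst x) * g (snd x) \<partial>lborel) = (\<integral>\<^sup>+x. f (fst x) * g (snd x) \<partial>(lborel \<Otimes>\<^sub>M lborel))"
    by (simp add: lborel_prod)
  also have "\<dots> = (\<integral>\<^sup>+x. f x * (\<integral>\<^sup>+y. g y \<partial>lborel) \<partial>lborel)"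
    by (subst lborel.nn_integral_fst[symmetric]) (auto simp: nn_integral_cmult)
  also have "\<dots> = (\<integral>\<^sup>+x. f x \<partial>lborel) * (\<integral>\<^sup>+y. g y \<partial>lborel)"
    by (simp add: nn_integral_multc)
  finally show ?thesis .
qed

lemma powr_shift_le_piecewise:
  fixes \<delta> s p a :: real
  assumes "\<delta> > 0" "s \<ge> 0" "a \<ge> 0"
  shows "s powr p * (\<delta> + s) powr -a
    \<le> indicator {0..\<delta>} s * s powr p * \<delta> powr -a + indicator {\<delta>..} s * s powr (p - a)"
proof (cases "s \<le> \<delta>")
  case True
  have "(\<delta> + s) powr -a \<le> \<delta> powr -a" using assms by (intro powr_mono2') auto
  then show ?thesis using True assms by (simp add: mult_left_mono add_increasing2)
next
  case False
  have "(\<delta> + s) powr -a \<le> s powr -a" using assms False by (intro powr_mono2') auto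
  then have "s powr p * (\<delta> + s) powr -a \<le> s powr p * s powr -a" by (intro mult_left_mono) auto
  then show ?thesis using False by (simp add: powr_add[symmetric])
qed

lemma nn_integral_powr_shift_le:
  fixes \<delta> p a :: real
  assumes \<delta>: "\<delta> > 0" and p: "p > -1" and a: "a > p + 1"
  shows "(\<integral>\<^sup>+ s. ennreal (indicator {0..} s * (s powr p * (\<delta> + s) powr -a)) \<partial>lborel)
    \<le> ennreal (\<delta> powr (p + 1 - a) * (1 / (p + 1) + 1 / (a - p - 1)))"
proof -
  have a0: "a \<ge> 0" using p a by simp
  have "(\<integral>\<^sup>+ s. ennreal (indicator {0..} s * (s powr p * (\<delta> + s) powr -a)) \<partial>lborel)
      \<le> (\<integral>\<^sup>+ s. ennreal (indicator {0..\<delta>} s * s powr p) * ennreal (\<delta> powr -a)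
           + ennreal (indicator {\<delta>..} s * s powr (p - a)) \<partial>lborel)"
  proof (intro nn_integral_mono)
    fix s :: real
    have "ennreal (indicator {0..} s * (s powr p * (\<delta> + s) powr -a))
        \<le> ennreal (indicator {0..\<delta>} s * s powr p * \<delta> powr -a + indicator {\<delta>..} s * s powr (p - a))"
      using powr_shift_le_piecewise[OF \<delta> _ a0, of s p]
      by (cases "s \<ge> 0") (auto intro!: ennreal_leI simp del: ennreal_plus)
    then show "ennreal (indicator {0..} s * (s powr p * (\<delta> + s) powr -a))
        \<le> ennreal (indicator {0..\<delta>} s * s powr p) * ennreal (\<delta> powr -a)
           + ennreal (indicator {\<delta>..} s * s powr (p - a))"
      by (simp add: ennreal_mult)
  qed
  also have "\<dots> = (\<integral>\<^sup>+ s. ennreal (indicator {0..\<delta>} s * s powr p) \<partial>lborel) * ennreal (\<delta> powr -a)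
      + (\<integral>\<^sup>+ s. ennreal (indicator {\<delta>..} s * s powr (p - a)) \<partial>lborel)"
    by (simp add: nn_integral_add nn_integral_multc)
  also have "\<dots> = ennreal (\<delta> powr (p + 1) / (p + 1)) * ennreal (\<delta> powr -a)
      + ennreal (- (\<delta> powr (p - a + 1)) / (p - a + 1))"
    using nn_integral_has_integral_lebesgue[OF _ has_integral_powr_from_0[of p \<delta>]]
          nn_integral_has_integral_lebesgue[OF _ has_integral_powr_to_inf[of "p - a" \<delta>]] \<delta> p a
    by simp
  also have "\<dots> = ennreal (\<delta> powr (p + 1 - a) * (1 / (p + 1) + 1 / (a - p - 1)))"
  proof -
    have "\<delta> powr (p + 1) * \<delta> powr -a = \<delta> powr (p + 1 - a)" by (simp add: powr_add[symmetric])
    moreover have "- (\<delta> powr (p - a + 1)) / (p - a + 1) = \<delta> powr (p + 1 - a) / (a - p - 1)"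
      by (simp add: minus_divide_right algebra_simps)
    ultimately show ?thesis using p a
      by (simp add: ennreal_mult[symmetric] ennreal_plus[symmetric] distrib_left del: ennreal_plus)
  qed
  finally show ?thesis .
qed

lemma nn_integral_shift_powr_le:
  fixes \<delta> a :: real
  assumes "\<delta> > 0" and "a > 1"
  shows "(\<integral>\<^sup>+ s. ennreal (indicator {0..} s * (\<delta> + s) powr -a) \<partial>lborel)
    \<le> ennreal (\<delta> powr (1 - a) * (1 + 1 / (a - 1)))"
proof -
  have "(\<integral>\<^sup>+ s. ennreal (indicator {0..} s * (\<delta> + s) powr -a) \<partial>lborel)
      = (\<integral>\<^sup>+ s. ennreal (indicator {0..} s * (s powr 0 * (\<delta> + s) powr -a)) \<partial>lborel)"
    \<comment> \<open>equal only almost everywhere, since \<open>0 powr 0 = 0\<close>\<close>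
    by (intro nn_integral_cong_AE eventually_mono[OF AE_lborel_singleton[of 0]]) auto
  also have "\<dots> \<le> ennreal (\<delta> powr (1 - a) * (1 + 1 / (a - 1)))"
    using nn_integral_powr_shift_le[of \<delta> 0 a] assms by simp
  finally show ?thesis .
qed

lemma nn_integral_shift_square_powr_le:
  fixes \<delta> c :: real
  assumes \<delta>: "\<delta> > 0" and c: "c > 1/2"
  shows "(\<integral>\<^sup>+ t. ennreal (indicator {0..} t * (\<delta> + t\<^sup>2) powr -c) \<partial>lborel)
    \<le> ennreal (2 powr c * (1 + 1 / (2 * c - 1)) * \<delta> powr (1/2 - c))"
proof -
  have square_le: "(\<delta> + t\<^sup>2) powr -c \<le> 2 powr c * (sqrt \<delta> + t) powr -(2 * c)" if t: "t \<ge> 0" for t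
  proof -
    have pos: "sqrt \<delta> + t > 0" using \<delta> t by (simp add: add_pos_nonneg)
    have "(sqrt \<delta> + t)\<^sup>2 / 2 \<le> \<delta> + t\<^sup>2"
      using \<delta> sum_squares_bound[of "sqrt \<delta>" t] by (simp add: power2_sum)
    then have "(\<delta> + t\<^sup>2) powr -c \<le> ((sqrt \<delta> + t)\<^sup>2 / 2) powr -c"
      using pos c by (intro powr_mono2') auto
    also have "\<dots> = 2 powr c * (sqrt \<delta> + t) powr -(2 * c)"
    proof -
      have "((sqrt \<delta> + t)\<^sup>2) powr -c = (sqrt \<delta> + t) powr -(2 * c)"
        using pos by (simp add: powr_powr flip: powr_numeral)
      then show ?thesis
        by (simp add: powr_divide powr_minus_divide)
    qed
    finally show ?thesis .
  qed
  have sqrt_powr: "sqrt \<delta> powr (1 - 2 * c) = \<delta> powr (1/2 - c)"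
  proof -
    have "sqrt \<delta> powr (1 - 2 * c) = \<delta> powr (1/2 * (1 - 2 * c))"
      using \<delta> by (simp add: powr_powr flip: powr_half_sqrt)
    then show ?thesis by (simp add: right_diff_distrib)
  qed
  have "(\<integral>\<^sup>+ t. ennreal (indicator {0..} t * (\<delta> + t\<^sup>2) powr -c) \<partial>lborel)
      \<le> (\<integral>\<^sup>+ t. ennreal (2 powr c) * ennreal (indicator {0..} t * (sqrt \<delta> + t) powr -(2 * c)) \<partial>lborel)"
  proof (intro nn_integral_mono)
    fix t :: real
    have "indicator {0..} t * (\<delta> + t\<^sup>2) powr -c \<le> 2 powr c * (indicator {0..} t * (sqrt \<delta> + t) powr -(2 * c))"
      using square_le[of t] by (cases "t \<ge> 0") auto
    then show "ennreal (indicator {0..} t * (\<delta> + t\<^sup>2) powr -c)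
        \<le> ennreal (2 powr c) * ennreal (indicator {0..} t * (sqrt \<delta> + t) powr -(2 * c))"
      by (simp add: ennreal_leI flip: ennreal_mult)
  qed
  also have "\<dots> = ennreal (2 powr c) * (\<integral>\<^sup>+ t. ennreal (indicator {0..} t * (sqrt \<delta> + t) powr -(2 * c)) \<partial>lborel)"
    by (simp add: nn_integral_cmult)
  also have "\<dots> \<le> ennreal (2 powr c) * ennreal (sqrt \<delta> powr (1 - 2 * c) * (1 + 1 / (2 * c - 1)))"
    using \<delta> c by (intro mult_left_mono nn_integral_shift_powr_le) auto
  also have "\<dots> = ennreal (2 powr c * (1 + 1 / (2 * c - 1)) * \<delta> powr (1/2 - c))"
    using sqrt_powr c by (simp add: ennreal_mult mult_ac)
  finally show ?thesis .
qed

lemma powr_neg_add3_le: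
  fixes D x y z a b c :: real
  assumes "0 < x" "0 < y" "0 < z" "x \<le> D" "y \<le> D" "z \<le> D" "a \<ge> 0" "b \<ge> 0" "c \<ge> 0"
  shows "D powr -(a + b + c) \<le> x powr -a * y powr -b * z powr -c"
proof -
  have "D powr -(a + b + c) = D powr -a * D powr -b * D powr -c"
    by (simp add: powr_add[symmetric])
  also have "\<dots> \<le> x powr -a * y powr -b * z powr -c"
    using assms by (intro mult_mono powr_mono2') auto
  finally show ?thesis .
qed

lemma kernel_le_product:
  fixes \<delta> s\<^sub>1 s\<^sub>2 t \<alpha> \<beta> a b c :: real and m :: nat
  assumes \<delta>: "\<delta> > 0" and s: "s\<^sub>1 \<ge> 0" "s\<^sub>2 \<ge> 0" "t \<ge> 0"
    and abc: "a \<ge> 0" "b \<ge> 0" "c \<ge> 0" "a + b + c = 2 + \<beta>"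
  shows "s\<^sub>1 powr \<alpha> * t ^ m / ((\<delta> + s\<^sub>1 + s\<^sub>2 + t\<^sup>2) powr (2 + \<beta>) * (\<delta> + s\<^sub>1 + s\<^sub>2 + t) ^ m)
    \<le> s\<^sub>1 powr \<alpha> * (\<delta> + s\<^sub>1) powr -a * ((\<delta> + s\<^sub>2) powr -b * (\<delta> + t\<^sup>2) powr -c)"
proof -
  define D where "D = \<delta> + s\<^sub>1 + s\<^sub>2 + t\<^sup>2"
  define E where "E = \<delta> + s\<^sub>1 + s\<^sub>2 + t"
  have "D > 0" "E > 0"
    using \<delta> s by (auto simp: D_def E_def intro!: add_pos_nonneg)
  have "t ^ m \<le> E ^ m"
    using \<delta> s by (intro power_mono) (auto simp: E_def)
  then have ratio: "t ^ m / E ^ m \<le> 1"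
    using \<open>E > 0\<close> by simp
  have "D powr -(a + b + c) \<le> (\<delta> + s\<^sub>1) powr -a * (\<delta> + s\<^sub>2) powr -b * (\<delta> + t\<^sup>2) powr -c"
    using \<delta> s abc by (intro powr_neg_add3_le) (auto simp: D_def intro: add_pos_nonneg)
  then have D_le: "D powr -(2 + \<beta>) \<le> (\<delta> + s\<^sub>1) powr -a * (\<delta> + s\<^sub>2) powr -b * (\<delta> + t\<^sup>2) powr -c"
    using abc by simp
  have "s\<^sub>1 powr \<alpha> * t ^ m / (D powr (2 + \<beta>) * E ^ m) = s\<^sub>1 powr \<alpha> * (t ^ m / E ^ m) * D powr -(2 + \<beta>)"
    by (simp only: powr_minus divide_inverse inverse_mult_distrib mult_ac)
  also have "\<dots> \<le> s\<^sub>1 powr \<alpha> * 1 * ((\<delta> + s\<^sub>1) powr -a * (\<delta> + s\<^sub>2) powr -b * (\<delta> + t\<^sup>2) powr -c)"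
    using ratio D_le \<open>E > 0\<close> s by (intro mult_mono) auto
  finally show ?thesis
    by (simp add: D_def E_def mult_ac)
qed

lemma nn_integral_cube_kernel_le:
  fixes \<delta> \<alpha> \<beta> a b c :: real and m :: nat
  assumes \<delta>: "\<delta> > 0" and \<alpha>: "\<alpha> > -1" and a: "a > \<alpha> + 1" and b: "b > 1" and c: "c > 1/2"
    and abc: "a + b + c = 2 + \<beta>"
  shows "(\<integral>\<^sup>+ x. indicator ({0..1} \<times> {0..1} \<times> {0..1}) x *
        ennreal (case x of (s\<^sub>1, s\<^sub>2, t) \<Rightarrow>
          s\<^sub>1 powr \<alpha> * t ^ m / ((\<delta> + s\<^sub>1 + s\<^sub>2 + t\<^sup>2) powr (2 + \<beta>) * (\<delta> + s\<^sub>1 + s\<^sub>2 + t) ^ m))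
      \<partial>(lborel :: (real \<times> real \<times> real) measure))
    \<le> ennreal ((1 / (\<alpha> + 1) + 1 / (a - \<alpha> - 1)) * (1 + 1 / (b - 1)) * (2 powr c * (1 + 1 / (2 * c - 1)))
        * \<delta> powr (\<alpha> - \<beta> + 1/2))"
proof -
  define f\<^sub>1 where "f\<^sub>1 s = ennreal (indicator {0..} s * (s powr \<alpha> * (\<delta> + s) powr -a))" for s :: real
  define f\<^sub>2 where "f\<^sub>2 s = ennreal (indicator {0..} s * (\<delta> + s) powr -b)" for s :: real
  define f\<^sub>3 where "f\<^sub>3 t = ennreal (indicator {0..} t * (\<delta> + t\<^sup>2) powr -c)" for t :: real
  have [measurable]: "f\<^sub>1 \<in> borel_measurable borel" "f\<^sub>2 \<in> borel_measurable borel" "f\<^sub>3 \<in> borel_measurable borel"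
    unfolding f\<^sub>1_def f\<^sub>2_def f\<^sub>3_def by measurable
  have [measurable]: "(\<lambda>y. f\<^sub>2 (fst y) * f\<^sub>3 (snd y)) \<in> borel_measurable (borel :: (real \<times> real) measure)"
    unfolding borel_prod[symmetric] by measurable
  have "(\<integral>\<^sup>+ x. indicator ({0..1} \<times> {0..1} \<times> {0..1}) x *
        ennreal (case x of (s\<^sub>1, s\<^sub>2, t) \<Rightarrow>
          s\<^sub>1 powr \<alpha> * t ^ m / ((\<delta> + s\<^sub>1 + s\<^sub>2 + t\<^sup>2) powr (2 + \<beta>) * (\<delta> + s\<^sub>1 + s\<^sub>2 + t) ^ m))
      \<partial>(lborel :: (real \<times> real \<times> real) measure))
      \<le> (\<integral>\<^sup>+ x. f\<^sub>1 (fst x) * (f\<^sub>2 (fst (snd x)) * f\<^sub>3 (snd (snd x))) \<partial>lborel)"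
  proof (intro nn_integral_mono, goal_cases)
    case (1 x)
    obtain s\<^sub>1 s\<^sub>2 t where x: "x = (s\<^sub>1, s\<^sub>2, t)"
      by (cases x)
    show ?case
    proof (cases "x \<in> {0..1} \<times> {0..1} \<times> {0..1}")
      case True
      then have s: "s\<^sub>1 \<ge> 0" "s\<^sub>2 \<ge> 0" "t \<ge> 0"
        using x by auto
      have "s\<^sub>1 powr \<alpha> * t ^ m / ((\<delta> + s\<^sub>1 + s\<^sub>2 + t\<^sup>2) powr (2 + \<beta>) * (\<delta> + s\<^sub>1 + s\<^sub>2 + t) ^ m)
          \<le> s\<^sub>1 powr \<alpha> * (\<delta> + s\<^sub>1) powr -a * ((\<delta> + s\<^sub>2) powr -b * (\<delta> + t\<^sup>2) powr -c)"
        using \<alpha> a b c abc by (intro kernel_le_product[OF \<delta> s]) auto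
      then show ?thesis
        using True s by (simp add: x f\<^sub>1_def f\<^sub>2_def f\<^sub>3_def ennreal_leI flip: ennreal_mult)
    qed simp
  qed
  also have "\<dots> = integral\<^sup>N lborel f\<^sub>1 * (\<integral>\<^sup>+y. f\<^sub>2 (fst y) * f\<^sub>3 (snd y) \<partial>lborel)"
    by (rule nn_integral_lborel_prod_mult) measurable
  also have "(\<integral>\<^sup>+y. f\<^sub>2 (fst y) * f\<^sub>3 (snd y) \<partial>lborel) = integral\<^sup>N lborel f\<^sub>2 * integral\<^sup>N lborel f\<^sub>3"
    by (rule nn_integral_lborel_prod_mult) measurable
  also have "integral\<^sup>N lborel f\<^sub>1 * (integral\<^sup>N lborel f\<^sub>2 * integral\<^sup>N lborel f\<^sub>3)
      \<le> ennreal (\<delta> powr (\<alpha> + 1 - a) * (1 / (\<alpha> + 1) + 1 / (a - \<alpha> - 1)))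
      * (ennreal (\<delta> powr (1 - b) * (1 + 1 / (b - 1)))
         * ennreal (2 powr c * (1 + 1 / (2 * c - 1)) * \<delta> powr (1/2 - c)))"
    unfolding f\<^sub>1_def f\<^sub>2_def f\<^sub>3_def
    by (intro mult_mono[OF nn_integral_powr_shift_le[OF \<delta> \<alpha> a]]
        mult_mono[OF nn_integral_shift_powr_le[OF \<delta> b] nn_integral_shift_square_powr_le[OF \<delta> c]]) auto
  also have "\<dots> = ennreal ((1 / (\<alpha> + 1) + 1 / (a - \<alpha> - 1)) * (1 + 1 / (b - 1)) * (2 powr c * (1 + 1 / (2 * c - 1)))
        * \<delta> powr (\<alpha> - \<beta> + 1/2))"
  proof -
    have "\<delta> powr (\<alpha> + 1 - a) * \<delta> powr (1 - b) * \<delta> powr (1/2 - c) = \<delta> powr (\<alpha> - \<beta> + 1/2)"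
    proof -
      have "\<alpha> - \<beta> + 1/2 = (\<alpha> + 1 - a) + (1 - b) + (1/2 - c)"
        using abc by simp
      then show ?thesis
        by (simp only: powr_add)
    qed
    moreover have "1 / (\<alpha> + 1) + 1 / (a - \<alpha> - 1) \<ge> 0" "1 + 1 / (b - 1) \<ge> 0" "1 + 1 / (2 * c - 1) \<ge> 0"
      using \<alpha> a b c by simp_all
    ultimately show ?thesis
      by (simp add: ennreal_mult[symmetric] mult_ac)
  qed
  finally show ?thesis .
qed

theorem lemma6p5:
  fixes n :: nat and \<alpha> \<beta> :: real
  assumes "n \<ge> 2" and "\<beta> \<ge> 0" and "\<alpha> > -1" and "\<alpha> < \<beta> - 1/2"
  shows "\<exists>C::real. \<forall>\<delta>::real. 0 < \<delta> \<and> \<delta> < 1/2 \<longrightarrow>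
    (\<integral>\<^sup>+ x. indicator ({0..1} \<times> {0..1} \<times> {0..1}) x *
        ennreal (case x of (s\<^sub>1, s\<^sub>2, t) \<Rightarrow>
          s\<^sub>1 powr \<alpha> * t ^ (2*n-3) /
          ((\<delta> + s\<^sub>1 + s\<^sub>2 + t\<^sup>2) powr (2 + \<beta>) * (\<delta> + s\<^sub>1 + s\<^sub>2 + t) ^ (2*n-3)))
      \<partial>(lborel :: (real \<times> real \<times> real) measure))
    \<le> ennreal (C * \<delta> powr (\<alpha> - \<beta> + 1/2))"
proof -
  define \<epsilon> where "\<epsilon> = (\<beta> - 1/2 - \<alpha>) / 4"
  define a where "a = \<alpha> + 1 + 2 * \<epsilon>"
  define b where "b = 1 + \<epsilon>"
  define c where "c = 1/2 + \<epsilon>"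
  have "\<epsilon> > 0" "4 * \<epsilon> = \<beta> - 1/2 - \<alpha>"
    using assms(4) by (simp_all add: \<epsilon>_def)
  then have "a > \<alpha> + 1" "b > 1" "c > 1/2" "a + b + c = 2 + \<beta>"
    unfolding a_def b_def c_def by linarith+
  then show ?thesis
    using nn_integral_cube_kernel_le[OF _ \<open>\<alpha> > -1\<close>, of _ a b c \<beta> "2*n-3"] by blast
qed

end
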